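(* Let $R$ be a commutative ring, $n\ge2$, and $\varepsilon\in{\rm E}_{2n}(R)$. Then there exists $\varepsilon_0\in{\rm E}_{\psi_n}(R)\subseteq {\rm E}_{2n-1}(R)$ such that $\varepsilon^t\,\psi_n\,\varepsilon=(1\perp\varepsilon_0)^t\,\psi_n\,(1\perp\varepsilon_0)$.
   Context: All rings are commutative with identity. ${\rm E}_m(R)$ is the subgroup of ${\rm SL}_m(R)$ generated by $I_m+\lambda e_{ij}$ ($i\neq j$, $\lambda\in R$). $\psi_n=\sum_{i=1}^n e_{2i-1,2i}-\sum_{i=1}^n e_{2i,2i-1}$. $1\perp\varepsilon_0$ denotes $\begin{pmatrix}1&0\\0&\varepsilon_0\end{pmatrix}$. Elements of $R^m$ are row vectors, ${}^t$ is transpose. For an invertible alternating (of the form $\nu-\nu^t$) $2n\times2n$ matrix $\varphi$ write $\varphi=\begin{pmatrix}0&-c\\ c^t&\nu\end{pmatrix}$, $\varphi^{-1}=\begin{pmatrix}0&d\\ -d^t&\mu\end{pmatrix}$ with $c,d\in R^{2n-1}$, and set $\alpha_\varphi(v)=I_{2n-1}+d^tv\nu$, $\beta_\varphi(v)=I_{2n-1}+\mu v^tc$; ${\rm E}_\varphi(R)$ is the subgroup of ${\rm GL}_{2n-1}(R)$ generated by all $\alpha_\varphi(v),\beta_\varphi(v)$, $v\in R^{2n-1}$. *)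

theory Defs
  imports "Jordan_Normal_Form.Matrix"
begin

text \<open>Matrices are Jordan_Normal_Form matrices, indices start at 0.
  Rows/columns numbered 1..m in the paper correspond to 0..m-1 here.\<close>

definition elem_mat :: "nat \<Rightarrow> nat \<Rightarrow> nat \<Rightarrow> 'a::comm_ring_1 \<Rightarrow> 'a mat" where
  "elem_mat m i j lam = 1\<^sub>m m + mat m m (\<lambda>(a,b). if a = i \<and> b = j then lam else 0)"

inductive_set gen_group :: "nat \<Rightarrow> 'a::comm_ring_1 mat set \<Rightarrow> 'a mat set"
  for m :: nat and gens :: "'a mat set" where
  one: "1\<^sub>m m \<in> gen_group m gens"
| mult: "A \<in> gen_group m gens \<Longrightarrow> g \<in> gens \<Longrightarrow> A * g \<in> gen_group m gens"
| mult_inv: "A \<in> gen_group m gens \<Longrightarrow> g \<in> gens \<Longrightarrow> h \<in> carrier_mat m m \<Longrightarrow>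
      g * h = 1\<^sub>m m \<Longrightarrow> h * g = 1\<^sub>m m \<Longrightarrow> A * h \<in> gen_group m gens"

definition Elem :: "nat \<Rightarrow> 'a::comm_ring_1 mat set" where
  "Elem m = gen_group m {elem_mat m i j lam | i j lam. i < m \<and> j < m \<and> i \<noteq> j}"

text \<open>psi_n: entries (2i-1,2i) = 1 and (2i,2i-1) = -1 (1-based), i = 1..n.\<close>
definition psi :: "nat \<Rightarrow> 'a::comm_ring_1 mat" where
  "psi n = mat (2*n) (2*n) (\<lambda>(a,b).
     if even a \<and> b = a + 1 then 1 else if odd a \<and> b + 1 = a then -1 else 0)"

definition one_perp :: "'a::comm_ring_1 mat \<Rightarrow> 'a mat" where
  "one_perp A = mat (dim_row A + 1) (dim_col A + 1) (\<lambda>(a,b).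
     if a = 0 \<and> b = 0 then 1 else if a = 0 \<or> b = 0 then 0 else A $$ (a - 1, b - 1))"

definition mat_inv :: "'a::comm_ring_1 mat \<Rightarrow> 'a mat" where
  "mat_inv phi = (SOME B. B \<in> carrier_mat (dim_row phi) (dim_row phi) \<and>
       phi * B = 1\<^sub>m (dim_row phi) \<and> B * phi = 1\<^sub>m (dim_row phi))"

text \<open>Decomposition phi = [[0,-c],[c^t,nu]], phi^-1 = [[0,d],[-d^t,mu]],
  with c, d row vectors of length dim-1.\<close>
definition phi_c :: "'a::comm_ring_1 mat \<Rightarrow> 'a vec" where
  "phi_c phi = vec (dim_row phi - 1) (\<lambda>j. - (phi $$ (0, j + 1)))"
definition phi_nu :: "'a::comm_ring_1 mat \<Rightarrow> 'a mat" where
  "phi_nu phi = mat (dim_row phi - 1) (dim_row phi - 1) (\<lambda>(a,b). phi $$ (a + 1, b + 1))"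
definition phi_d :: "'a::comm_ring_1 mat \<Rightarrow> 'a vec" where
  "phi_d phi = vec (dim_row phi - 1) (\<lambda>j. mat_inv phi $$ (0, j + 1))"
definition phi_mu :: "'a::comm_ring_1 mat \<Rightarrow> 'a mat" where
  "phi_mu phi = mat (dim_row phi - 1) (dim_row phi - 1) (\<lambda>(a,b). mat_inv phi $$ (a + 1, b + 1))"

definition alpha_phi :: "'a::comm_ring_1 mat \<Rightarrow> 'a vec \<Rightarrow> 'a mat" where
  "alpha_phi phi v = (let m = dim_row phi - 1 in
     1\<^sub>m m + mat_of_cols m [phi_d phi] * mat_of_rows m [v] * phi_nu phi)"
definition beta_phi :: "'a::comm_ring_1 mat \<Rightarrow> 'a vec \<Rightarrow> 'a mat" where
  "beta_phi phi v = (let m = dim_row phi - 1 in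
     1\<^sub>m m + phi_mu phi * mat_of_cols m [v] * mat_of_rows m [phi_c phi])"

definition E_phi :: "'a::comm_ring_1 mat \<Rightarrow> 'a mat set" where
  "E_phi phi = gen_group (dim_row phi - 1)
     ({alpha_phi phi v | v. v \<in> carrier_vec (dim_row phi - 1)} \<union>
      {beta_phi phi v | v. v \<in> carrier_vec (dim_row phi - 1)})"

end

theory Submission
  imports Defs
begin

(*
  Every \<epsilon> \<in> E_2n(R) factors as s (1 \<perp> \<eta>) with s symplectic (s^t \<psi> s = \<psi>) and
  \<eta> \<in> E_\<psi>(R); then \<epsilon>^t \<psi> \<epsilon> = (1 \<perp> \<eta>)^t \<psi> (1 \<perp> \<eta>).  For \<psi> = \<psi>_n the generators
  \<alpha>_\<psi>(v) and \<beta>_\<psi>(v) are exactly the transvections of the first row and of the first column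
  of size 2n-1, so E_\<psi> \<subseteq> E_(2n-1), and E_\<psi> contains every elementary matrix (e_ij is a
  commutator of e_i0 and e_0j).

  The factorization is built one elementary generator e_ij(c) at a time.  If i, j \<noteq> 0 then
  e_ij(c) = 1 \<perp> e_(i-1)(j-1)(c) is absorbed into \<eta>.  Moving e_0j(c) (resp. e_i0(c)) to the
  left of 1 \<perp> \<eta> turns it into a first-row (resp. first-column) transvection of size 2n, and
  such a transvection is S (1 \<perp> \<tau>) with S symplectic and \<tau> a first-column (resp. first-row)
  transvection of size 2n-1, which lies in E_\<psi>.
*)

lemma index_mult_mat_sum:
  assumes "A \<in> carrier_mat r K" "B \<in> carrier_mat K c" "i < r" "j < c"
  shows "(A * B) $$ (i,j) = (\<Sum>k<K. A $$ (i,k) * B $$ (k,j))"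
  using assms by (auto simp: scalar_prod_def lessThan_atLeast0 intro!: sum.cong)

lemma index_mult_sparse_col:
  assumes "A \<in> carrier_mat r K" "B \<in> carrier_mat K c" "i < r" "j < c" "p < K" "p' < K"
    and "\<And>l. l < K \<Longrightarrow> B $$ (l,j) = (if l = p then \<beta> else 0) + (if l = p' then \<beta>' else 0)"
  shows "(A * B) $$ (i,j) = A $$ (i,p) * \<beta> + A $$ (i,p') * \<beta>'"
proof -
  have "(A * B) $$ (i,j) = (\<Sum>l<K. A $$ (i,l) * B $$ (l,j))"
    by (rule index_mult_mat_sum[OF assms(1-4)])
  also have "\<dots> = (\<Sum>l<K. (if l = p then A $$ (i,p) * \<beta> else 0) + (if l = p' then A $$ (i,p') * \<beta>' else 0))"
    by (rule sum.cong) (auto simp: assms(7) ring_distribs)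
  also have "\<dots> = A $$ (i,p) * \<beta> + A $$ (i,p') * \<beta>'"
    using assms(5,6) by (simp add: sum.distrib)
  finally show ?thesis .
qed

lemma index_mult_sparse_row:
  assumes "A \<in> carrier_mat r K" "B \<in> carrier_mat K c" "i < r" "j < c" "p < K" "p' < K"
    and "\<And>l. l < K \<Longrightarrow> A $$ (i,l) = (if l = p then \<alpha> else 0) + (if l = p' then \<alpha>' else 0)"
  shows "(A * B) $$ (i,j) = \<alpha> * B $$ (p,j) + \<alpha>' * B $$ (p',j)"
proof -
  have "(A * B) $$ (i,j) = (\<Sum>l<K. A $$ (i,l) * B $$ (l,j))"
    by (rule index_mult_mat_sum[OF assms(1-4)])
  also have "\<dots> = (\<Sum>l<K. (if l = p then \<alpha> * B $$ (p,j) else 0) + (if l = p' then \<alpha>' * B $$ (p',j) else 0))"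
    by (rule sum.cong) (auto simp: assms(7) ring_distribs)
  also have "\<dots> = \<alpha> * B $$ (p,j) + \<alpha>' * B $$ (p',j)"
    using assms(5,6) by (simp add: sum.distrib)
  finally show ?thesis .
qed

lemma mat_inverse_unique:
  fixes A B C :: "'a::semiring_1 mat"
  assumes "A \<in> carrier_mat m m" "B \<in> carrier_mat m m" "C \<in> carrier_mat m m"
    and "B * A = 1\<^sub>m m" "A * C = 1\<^sub>m m"
  shows "B = C"
proof -
  have "B = B * 1\<^sub>m m" using assms(2) by simp
  also have "\<dots> = B * (A * C)" using assms(5) by simp
  also have "\<dots> = (B * A) * C" using assms(1-3) by (simp add: assoc_mult_mat)
  finally show ?thesis using assms(3,4) by simp
qed

lemma sum_lessThan_double:
  "(\<Sum>k<2*n. F k) = (\<Sum>i<n. F (2*i) + F (2*i+1) :: 'b::comm_monoid_add)" for n :: nat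
proof (induction n)
  case (Suc n)
  have "{..<2 * Suc n} = insert (2*n+1) (insert (2*n) {..<2*n})" by auto
  then show ?case using Suc by (simp add: add_ac)
qed simp

section \<open>The alternating matrix psi and symplectic matrices\<close>

lemma psi_carrier [simp]: "psi n \<in> carrier_mat (2*n) (2*n)"
  by (simp add: psi_def)

lemma psi_dims [simp]: "dim_row (psi n) = 2*n" "dim_col (psi n) = 2*n"
  by (simp_all add: psi_def)

lemma index_psi: "a < 2*n \<Longrightarrow> b < 2*n \<Longrightarrow> psi n $$ (a,b) =
    (if even a \<and> b = a+1 then 1 else if odd a \<and> b+1 = a then -1 else 0)"
  by (simp add: psi_def)

lemma index_psi_mult:
  assumes "A \<in> carrier_mat (2*n) c" "i < 2*n" "j < c"
  shows "(psi n * A) $$ (i,j) = (if even i then A $$ (i+1,j) else - A $$ (i-1,j))"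
proof (cases "even i")
  case True
  then have "i+1 < 2*n" using assms(2) by presburger
  then show ?thesis
    using True assms by (subst index_mult_sparse_row[OF psi_carrier assms(1-3) _ _, of "i+1" "i+1" 1 0])
      (auto simp: index_psi)
next
  case False
  then have "i-1 < 2*n" "i \<ge> 1" using assms(2) by presburger+
  then show ?thesis
    using False assms by (subst index_mult_sparse_row[OF psi_carrier assms(1-3) _ _, of "i-1" "i-1" "-1" 0])
      (auto simp: index_psi)
qed

lemma index_psi_mult_vec:
  assumes "v \<in> carrier_vec (2*n)" "i < 2*n"
  shows "(psi n *\<^sub>v v) $ i = (if even i then v $ (i+1) else - v $ (i-1))"
proof -
  have sum: "(psi n *\<^sub>v v) $ i = (\<Sum>k<2*n. psi n $$ (i,k) * v $ k)"
    using assms by (simp add: scalar_prod_def lessThan_atLeast0)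
  show ?thesis
  proof (cases "even i")
    case True
    then have "i+1 < 2*n" using assms(2) by presburger
    moreover have "(\<Sum>k<2*n. psi n $$ (i,k) * v $ k) = (\<Sum>k<2*n. if k = i+1 then v $ (i+1) else 0)"
      using True assms by (intro sum.cong) (auto simp: index_psi)
    ultimately show ?thesis using sum True by simp
  next
    case False
    then have "i-1 < 2*n" "i \<ge> 1" using assms(2) by presburger+
    moreover have "(\<Sum>k<2*n. psi n $$ (i,k) * v $ k) = (\<Sum>k<2*n. if k = i-1 then - v $ (i-1) else 0)"
      using False assms calculation by (intro sum.cong) (auto simp: index_psi)
    ultimately show ?thesis using sum False by simp
  qed
qed

lemma psi_mult_psi: "psi n * psi n = - 1\<^sub>m (2*n)"
proof (rule eq_matI)
  fix i j assume "i < dim_row (- 1\<^sub>m (2*n))" "j < dim_col (- 1\<^sub>m (2*n))"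
  then have ij: "i < 2*n" "j < 2*n" by auto
  show "(psi n * psi n) $$ (i,j) = (- 1\<^sub>m (2*n)) $$ (i,j)"
  proof (cases "even i")
    case True
    then have "i+1 < 2*n" using ij by presburger
    then show ?thesis using True ij by (subst index_psi_mult) (auto simp: index_psi)
  next
    case False
    then have "i-1 < 2*n" "i \<ge> 1" using ij by presburger+
    then show ?thesis using False ij by (subst index_psi_mult) (auto simp: index_psi)
  qed
qed simp_all

lemma transpose_psi: "transpose_mat (psi n) = - psi n"
proof (rule eq_matI)
  fix i j assume "i < dim_row (- psi n)" "j < dim_col (- psi n)"
  then show "transpose_mat (psi n) $$ (i,j) = (- psi n) $$ (i,j)"
    by (simp add: index_psi) presburger
qed simp_all

lemma mat_inv_psi: "mat_inv (psi n) = - psi n"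
proof -
  let ?P = "\<lambda>B. B \<in> carrier_mat (2*n) (2*n) \<and> psi n * B = 1\<^sub>m (2*n) \<and> B * psi n = 1\<^sub>m (2*n)"
  have P: "?P (- psi n)" by (simp add: psi_mult_psi)
  have "?P (mat_inv (psi n))" unfolding mat_inv_def psi_dims by (rule someI[of ?P, OF P])
  then show ?thesis
    using P mat_inverse_unique[OF psi_carrier, where B = "mat_inv (psi n)" and C = "- psi n"] by blast
qed

lemma scalar_prod_psi_self:
  assumes "v \<in> carrier_vec (2*n)"
  shows "(psi n *\<^sub>v v) \<bullet> v = 0"
proof -
  have "(psi n *\<^sub>v v) \<bullet> v = (\<Sum>k<2*n. (psi n *\<^sub>v v) $ k * v $ k)"
    using assms by (simp add: scalar_prod_def lessThan_atLeast0)
  also have "\<dots> = (\<Sum>i<n. v $ (2*i+1) * v $ (2*i) - v $ (2*i) * v $ (2*i+1))"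
    unfolding sum_lessThan_double using assms
    by (intro sum.cong) (auto simp: index_psi_mult_vec simp del: index_mult_mat_vec)
  also have "\<dots> = 0" by (simp add: mult.commute)
  finally show ?thesis .
qed


definition symplectic :: "nat \<Rightarrow> 'a::comm_ring_1 mat \<Rightarrow> bool" where
  "symplectic n S \<longleftrightarrow> S \<in> carrier_mat (2*n) (2*n) \<and> transpose_mat S * psi n * S = psi n"

lemma symplectic_form_mult:
  assumes "symplectic n s" and S: "S \<in> carrier_mat (2*n) (2*n)"
  shows "transpose_mat (s * S) * psi n * (s * S) = transpose_mat S * psi n * S"
proof -
  have s: "s \<in> carrier_mat (2*n) (2*n)" and form: "transpose_mat s * psi n * s = psi n"
    using assms(1) by (auto simp: symplectic_def)
  have sT: "transpose_mat s \<in> carrier_mat (2*n) (2*n)" and ST: "transpose_mat S \<in> carrier_mat (2*n) (2*n)"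
    using s S by auto
  have sT_psi: "transpose_mat s * psi n \<in> carrier_mat (2*n) (2*n)" using sT by simp
  have "transpose_mat (s * S) * psi n * (s * S) = transpose_mat S * (transpose_mat s * psi n) * (s * S)"
    by (simp add: transpose_mult[OF s S] assoc_mult_mat[OF ST sT psi_carrier])
  also have "\<dots> = transpose_mat S * ((transpose_mat s * psi n * s) * S)"
    by (simp add: assoc_mult_mat[OF ST sT_psi mult_carrier_mat[OF s S]] assoc_mult_mat[OF sT_psi s S])
  also have "\<dots> = transpose_mat S * psi n * S"
    by (simp add: form assoc_mult_mat[OF ST psi_carrier S])
  finally show ?thesis .
qed

lemma symplectic_mult:
  assumes "symplectic n s" "symplectic n S"
  shows "symplectic n (s * S)"
proof -
  have s: "s \<in> carrier_mat (2*n) (2*n)" using assms(1) by (simp add: symplectic_def)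
  have S: "S \<in> carrier_mat (2*n) (2*n)" and form: "transpose_mat S * psi n * S = psi n"
    using assms(2) by (simp_all add: symplectic_def)
  show ?thesis
    unfolding symplectic_def symplectic_form_mult[OF assms(1) S] form
    using mult_carrier_mat[OF s S] by simp
qed

lemma symplectic_one: "symplectic n (1\<^sub>m (2*n))"
  by (simp add: symplectic_def)

text \<open>Since \<psi>^t = -\<psi>, (1 + X)^t \<psi> (1 + X) = \<psi> + (\<psi> X - (\<psi> X)^t) + X^t \<psi> X.\<close>
lemma symplectic_one_plus:
  assumes X: "X \<in> carrier_mat (2*n) (2*n)"
    and sym: "transpose_mat (psi n * X) = psi n * X"
    and null: "transpose_mat X * (psi n * X) = 0\<^sub>m (2*n) (2*n)"
  shows "symplectic n (1\<^sub>m (2*n) + X)"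
proof -
  let ?N = "2*n" and ?XT = "transpose_mat X"
  have XT: "?XT \<in> carrier_mat ?N ?N" using X by simp
  have psiX: "psi n * X \<in> carrier_mat ?N ?N" by (rule mult_carrier_mat[OF psi_carrier X])
  have "psi n * X = ?XT * transpose_mat (psi n)"
    using transpose_mult[OF psi_carrier X] unfolding sym .
  also have "\<dots> = - (?XT * psi n)"
    unfolding transpose_psi using XT by (simp add: uminus_mult_right_mat)
  finally have XT_psi: "?XT * psi n = - (psi n * X)" by simp
  have "transpose_mat (1\<^sub>m ?N + X) * psi n = 1\<^sub>m ?N * psi n + ?XT * psi n"
    unfolding transpose_add[OF one_carrier_mat X] transpose_one
    by (rule add_mult_distrib_mat[OF one_carrier_mat XT psi_carrier])
  also have "\<dots> = psi n + - (psi n * X)" unfolding XT_psi by simp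
  finally have "transpose_mat (1\<^sub>m ?N + X) * psi n * (1\<^sub>m ?N + X)
      = (psi n + - (psi n * X)) * (1\<^sub>m ?N + X)" by simp
  also have "\<dots> = (psi n + - (psi n * X)) + (psi n * X + - (psi n * X) * X)"
    using mult_add_distrib_mat[OF add_carrier_mat[OF uminus_carrier_mat[OF psiX]] one_carrier_mat X]
      add_mult_distrib_mat[OF psi_carrier uminus_carrier_mat[OF psiX] X]
      right_mult_one_mat[OF add_carrier_mat[OF uminus_carrier_mat[OF psiX]]] by simp
  also have "- (psi n * X) * X = ?XT * (psi n * X)"
    unfolding XT_psi[symmetric] by (rule assoc_mult_mat[OF XT psi_carrier X])
  also have "(psi n + - (psi n * X)) + (psi n * X + ?XT * (psi n * X)) = psi n"
    unfolding null using psiX by (intro eq_matI) (auto simp del: index_mult_mat(1))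
  finally show ?thesis using X by (simp add: symplectic_def)
qed


section \<open>Groups generated by invertible matrices\<close>

lemma assoc_mult_mat_middle:
  assumes "A \<in> carrier_mat m m" "g \<in> carrier_mat m m" "h \<in> carrier_mat m m" "B \<in> carrier_mat m m"
  shows "(A * g) * (h * B) = A * ((g * h) * B)"
proof -
  have "(A * g) * (h * B) = A * (g * (h * B))" using assms by (intro assoc_mult_mat) auto
  also have "g * (h * B) = (g * h) * B" using assms by (intro assoc_mult_mat[symmetric]) auto
  finally show ?thesis .
qed

lemma gen_group_carrier:
  assumes "gens \<subseteq> carrier_mat m m" "A \<in> gen_group m gens"
  shows "A \<in> carrier_mat m m"
  using assms(2) by induction (use assms(1) in auto)

lemma gen_group_gen:
  assumes "gens \<subseteq> carrier_mat m m" "g \<in> gens"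
  shows "g \<in> gen_group m gens"
proof -
  have "1\<^sub>m m * g \<in> gen_group m gens" by (rule gen_group.mult[OF gen_group.one assms(2)])
  then show ?thesis using assms by auto
qed

lemma gen_group_mult:
  assumes gens: "gens \<subseteq> carrier_mat m m" and A: "A \<in> gen_group m gens"
    and "B \<in> gen_group m gens"
  shows "A * B \<in> gen_group m gens"
  using assms(3)
proof induction
  case one
  then show ?case using gen_group_carrier[OF gens A] A by simp
next
  case (mult B g)
  have "A * (B * g) = (A * B) * g"
    using gen_group_carrier[OF gens A] gen_group_carrier[OF gens mult(1)] mult(2) gens
    by (subst assoc_mult_mat[symmetric, of _ m m _ m _ m]) auto
  then show ?case using gen_group.mult[OF mult(3,2)] by simp
next
  case (mult_inv B g h)
  have "A * (B * h) = (A * B) * h"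
    using gen_group_carrier[OF gens A] gen_group_carrier[OF gens mult_inv(1)] mult_inv(3)
    by (subst assoc_mult_mat[symmetric, of _ m m _ m _ m]) auto
  then show ?case using gen_group.mult_inv[OF mult_inv(6,2,3,4,5)] by simp
qed

lemma gen_group_inverse:
  assumes gens: "gens \<subseteq> carrier_mat m m"
    and invertible: "\<And>g. g \<in> gens \<Longrightarrow> \<exists>h \<in> carrier_mat m m. g * h = 1\<^sub>m m \<and> h * g = 1\<^sub>m m"
    and "A \<in> gen_group m gens"
  shows "\<exists>B \<in> gen_group m gens. A * B = 1\<^sub>m m \<and> B * A = 1\<^sub>m m"
proof -
  have step: "\<exists>B \<in> gen_group m gens. (A * x) * B = 1\<^sub>m m \<and> B * (A * x) = 1\<^sub>m m"
    if A: "A \<in> gen_group m gens" and IH: "\<exists>B \<in> gen_group m gens. A * B = 1\<^sub>m m \<and> B * A = 1\<^sub>m m"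
      and x: "x \<in> carrier_mat m m" and y: "y \<in> gen_group m gens" "x * y = 1\<^sub>m m" "y * x = 1\<^sub>m m"
    for A x y
  proof -
    obtain B where B: "B \<in> gen_group m gens" "A * B = 1\<^sub>m m" "B * A = 1\<^sub>m m" using IH by blast
    have A': "A \<in> carrier_mat m m" and B': "B \<in> carrier_mat m m" and y': "y \<in> carrier_mat m m"
      using gen_group_carrier[OF gens] A B(1) y(1) by auto
    have "(A * x) * (y * B) = 1\<^sub>m m"
      using assoc_mult_mat_middle[OF A' x y' B'] y B A' B' by simp
    moreover have "(y * B) * (A * x) = 1\<^sub>m m"
      using assoc_mult_mat_middle[OF y' B' A' x] y B x B' by simp
    moreover have "y * B \<in> gen_group m gens" by (rule gen_group_mult[OF gens y(1) B(1)])
    ultimately show ?thesis by blast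
  qed
  from assms(3) show ?thesis
  proof induction
    case one
    show ?case by (intro bexI[of _ "1\<^sub>m m"] gen_group.one) simp
  next
    case (mult A g)
    obtain h where h: "h \<in> carrier_mat m m" "g * h = 1\<^sub>m m" "h * g = 1\<^sub>m m"
      using invertible[OF mult(2)] by blast
    have "h \<in> gen_group m gens"
      using gen_group.mult_inv[OF gen_group.one mult(2) h] h(1) by simp
    then show ?case using step[OF mult(1,3) _ _ h(2,3)] gens mult(2) by blast
  next
    case (mult_inv A g h)
    then show ?case using step[OF mult_inv(1,6,3) gen_group_gen[OF gens mult_inv(2)]] by blast
  qed
qed

lemma gen_group_subsetI:
  assumes gens': "gens' \<subseteq> carrier_mat m m"
    and invertible: "\<And>g. g \<in> gens' \<Longrightarrow> \<exists>h \<in> carrier_mat m m. g * h = 1\<^sub>m m \<and> h * g = 1\<^sub>m m"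
    and sub: "gens \<subseteq> gen_group m gens'"
  shows "gen_group m gens \<subseteq> gen_group m gens'"
proof
  fix A assume "A \<in> gen_group m gens"
  then show "A \<in> gen_group m gens'"
  proof induction
    case one
    show ?case by (rule gen_group.one)
  next
    case (mult A g)
    then show ?case using gen_group_mult[OF gens'] sub by blast
  next
    case (mult_inv A g h)
    have g: "g \<in> gen_group m gens'" using sub mult_inv(2) by blast
    obtain B where B: "B \<in> gen_group m gens'" "g * B = 1\<^sub>m m"
      using gen_group_inverse[OF gens' invertible g] by blast
    have "h = B"
      using mat_inverse_unique[OF gen_group_carrier[OF gens' g] mult_inv(3)
          gen_group_carrier[OF gens' B(1)] mult_inv(5) B(2)] .
    then show ?case using gen_group_mult[OF gens' mult_inv(6) B(1)] by simp
  qed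
qed


section \<open>Elementary matrices and first-row and first-column transvections\<close>

definition elem_gens :: "nat \<Rightarrow> 'a::comm_ring_1 mat set" where
  "elem_gens m = {elem_mat m i j lam | i j lam. i < m \<and> j < m \<and> i \<noteq> j}"

lemma Elem_eq_gen_group: "Elem m = gen_group m (elem_gens m)"
  by (simp add: Elem_def elem_gens_def)

lemma elem_mat_carrier [simp]: "elem_mat m i j c \<in> carrier_mat m m"
  by (simp add: elem_mat_def)

lemma elem_mat_dims [simp]: "dim_row (elem_mat m i j c) = m" "dim_col (elem_mat m i j c) = m"
  by (simp_all add: elem_mat_def)

lemma index_elem_mat: "a < m \<Longrightarrow> b < m \<Longrightarrow> elem_mat m i j c $$ (a,b) =
    (if a = b then 1 else 0) + (if a = i \<and> b = j then c else 0)"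
  by (simp add: elem_mat_def)

lemma transpose_elem_mat: "transpose_mat (elem_mat m i j c) = elem_mat m j i c"
  by (rule eq_matI) (auto simp: index_elem_mat)

lemma index_mult_elem_mat:
  assumes "X \<in> carrier_mat m m" "a < m" "b < m" "p < m" "q < m"
  shows "(X * elem_mat m p q d) $$ (a,b) = X $$ (a,b) + (if b = q then X $$ (a,p) * d else 0)"
proof -
  have "(X * elem_mat m p q d) $$ (a,b) = X $$ (a,b) * 1 + X $$ (a,p) * (if b = q then d else 0)"
    by (rule index_mult_sparse_col[OF assms(1) elem_mat_carrier assms(2,3,3,4)])
      (use assms in \<open>auto simp: index_elem_mat\<close>)
  then show ?thesis by simp
qed

lemma elem_mat_mult_inverse:
  assumes "i < m" "j < m" "i \<noteq> j"
  shows "elem_mat m i j c * elem_mat m i j (-c) = 1\<^sub>m m"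
  by (rule eq_matI) (use assms in \<open>auto simp: index_mult_elem_mat index_elem_mat
      simp del: index_mult_mat(1)\<close>)

lemma elem_mat_inverse_unique:
  assumes "i < m" "j < m" "i \<noteq> j" "h \<in> carrier_mat m m" "h * elem_mat m i j c = 1\<^sub>m m"
  shows "h = elem_mat m i j (-c)"
  by (rule mat_inverse_unique[OF elem_mat_carrier assms(4) elem_mat_carrier assms(5)
      elem_mat_mult_inverse[OF assms(1-3)]])

lemma elem_gens_carrier: "elem_gens m \<subseteq> carrier_mat m m"
  by (auto simp: elem_gens_def)

lemma elem_gens_invertible:
  assumes "g \<in> elem_gens m"
  shows "\<exists>h \<in> carrier_mat m m. g * h = 1\<^sub>m m \<and> h * g = 1\<^sub>m m"
proof -
  obtain i j c where g: "g = elem_mat m i j c" "i < m" "j < m" "i \<noteq> j"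
    using assms by (auto simp: elem_gens_def)
  show ?thesis
    using elem_mat_mult_inverse[OF g(2-4), of c] elem_mat_mult_inverse[OF g(2-4), of "-c"] g(1)
    by (intro bexI[of _ "elem_mat m i j (-c)"]) auto
qed

lemma Elem_carrier: "A \<in> Elem m \<Longrightarrow> A \<in> carrier_mat m m"
  unfolding Elem_eq_gen_group by (rule gen_group_carrier[OF elem_gens_carrier])

lemma Elem_mult: "A \<in> Elem m \<Longrightarrow> B \<in> Elem m \<Longrightarrow> A * B \<in> Elem m"
  unfolding Elem_eq_gen_group by (rule gen_group_mult[OF elem_gens_carrier])

lemma Elem_inverse: "A \<in> Elem m \<Longrightarrow> \<exists>B \<in> Elem m. A * B = 1\<^sub>m m \<and> B * A = 1\<^sub>m m"
  unfolding Elem_eq_gen_group by (rule gen_group_inverse[OF elem_gens_carrier elem_gens_invertible])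

lemma one_in_Elem: "1\<^sub>m m \<in> Elem m"
  unfolding Elem_eq_gen_group by (rule gen_group.one)

lemma elem_mat_in_Elem: "i < m \<Longrightarrow> j < m \<Longrightarrow> i \<noteq> j \<Longrightarrow> elem_mat m i j c \<in> Elem m"
  unfolding Elem_eq_gen_group by (rule gen_group_gen[OF elem_gens_carrier]) (auto simp: elem_gens_def)

lemma Elem_transpose:
  assumes "A \<in> Elem m"
  shows "transpose_mat A \<in> Elem m"
proof -
  have step: "transpose_mat (A * elem_mat m i j c) \<in> Elem m"
    if "A \<in> carrier_mat m m" "transpose_mat A \<in> Elem m" "i < m" "j < m" "i \<noteq> j" for A i j c
  proof -
    have "transpose_mat (A * elem_mat m i j c) = elem_mat m j i c * transpose_mat A"
      using transpose_mult[OF that(1) elem_mat_carrier] by (simp add: transpose_elem_mat)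
    then show ?thesis using Elem_mult[OF elem_mat_in_Elem that(2)] that(3-5) by simp
  qed
  from assms show ?thesis unfolding Elem_eq_gen_group
  proof induction
    case one
    then show ?case by (simp add: gen_group.one)
  next
    case (mult A g)
    then obtain i j c where "g = elem_mat m i j c" "i < m" "j < m" "i \<noteq> j"
      by (auto simp: elem_gens_def)
    then show ?case
      using step gen_group_carrier[OF elem_gens_carrier mult(1)] mult(3)
      unfolding Elem_eq_gen_group by blast
  next
    case (mult_inv A g h)
    then obtain i j c where g: "g = elem_mat m i j c" "i < m" "j < m" "i \<noteq> j"
      by (auto simp: elem_gens_def)
    then have "h = elem_mat m i j (-c)"
      using elem_mat_inverse_unique[OF g(2-4) mult_inv(3)] mult_inv(5) by simp
    then show ?case
      using step g(2-4) gen_group_carrier[OF elem_gens_carrier mult_inv(1)] mult_inv(6)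
      unfolding Elem_eq_gen_group by blast
  qed
qed

definition row_transvection :: "nat \<Rightarrow> 'a::comm_ring_1 vec \<Rightarrow> 'a mat" where
  "row_transvection m y = mat m m (\<lambda>(a,b). (if a = b then 1 else 0) + (if a = 0 then y $ b else 0))"

definition col_transvection :: "nat \<Rightarrow> 'a::comm_ring_1 vec \<Rightarrow> 'a mat" where
  "col_transvection m y = mat m m (\<lambda>(a,b). (if a = b then 1 else 0) + (if b = 0 then y $ a else 0))"

lemma row_transvection_carrier [simp]: "row_transvection m y \<in> carrier_mat m m"
  by (simp add: row_transvection_def)

lemma col_transvection_carrier [simp]: "col_transvection m y \<in> carrier_mat m m"
  by (simp add: col_transvection_def)

lemma transvection_dims [simp]:
  "dim_row (row_transvection m y) = m" "dim_col (row_transvection m y) = m"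
  "dim_row (col_transvection m y) = m" "dim_col (col_transvection m y) = m"
  by (simp_all add: row_transvection_def col_transvection_def)

lemma index_row_transvection: "a < m \<Longrightarrow> b < m \<Longrightarrow> row_transvection m y $$ (a,b) =
    (if a = b then 1 else 0) + (if a = 0 then y $ b else 0)"
  by (simp add: row_transvection_def)

lemma index_col_transvection: "a < m \<Longrightarrow> b < m \<Longrightarrow> col_transvection m y $$ (a,b) =
    (if a = b then 1 else 0) + (if b = 0 then y $ a else 0)"
  by (simp add: col_transvection_def)

lemma transpose_row_transvection: "transpose_mat (row_transvection m y) = col_transvection m y"
  by (rule eq_matI) (auto simp: row_transvection_def col_transvection_def)

lemma row_transvection_in_Elem:
  assumes "y $ 0 = 0"
  shows "row_transvection m y \<in> Elem m"
proof -
  define trunc where "trunc k = vec m (\<lambda>b. if b < k then y $ b else 0)" for k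
  have "row_transvection m (trunc k) \<in> Elem m" for k
  proof (induction k)
    case 0
    have "row_transvection m (trunc 0) = 1\<^sub>m m"
      by (rule eq_matI) (auto simp: index_row_transvection trunc_def)
    then show ?case using one_in_Elem by simp
  next
    case (Suc k)
    show ?case
    proof (cases "k \<noteq> 0 \<and> k < m")
      case False
      then have "row_transvection m (trunc (Suc k)) = row_transvection m (trunc k)"
        using assms by (intro eq_matI) (auto simp: index_row_transvection trunc_def less_Suc_eq)
      then show ?thesis using Suc by simp
    next
      case True
      have "row_transvection m (trunc (Suc k)) = row_transvection m (trunc k) * elem_mat m 0 k (y $ k)"
        using True assms by (intro eq_matI)
          (auto simp: index_mult_elem_mat index_row_transvection trunc_def less_Suc_eq
            simp del: index_mult_mat(1))
      then show ?thesis using Elem_mult[OF Suc.IH elem_mat_in_Elem[of 0 m k "y $ k"]] True by simp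
    qed
  qed
  moreover have "row_transvection m (trunc m) = row_transvection m y"
    by (rule eq_matI) (auto simp: index_row_transvection trunc_def)
  ultimately show ?thesis by metis
qed

lemma col_transvection_in_Elem: "y $ 0 = 0 \<Longrightarrow> col_transvection m y \<in> Elem m"
  using Elem_transpose[OF row_transvection_in_Elem] by (simp add: transpose_row_transvection)


section \<open>The group E_psi\<close>

lemma index_mult_phi_nu_psi:
  assumes "X \<in> carrier_mat r (2*n-1)" "a < r" "b < 2*n-1"
  shows "(X * phi_nu (psi n)) $$ (a,b) =
    (if b = 0 then 0 else if even b then X $$ (a,b-1) else - X $$ (a,b+1))"
proof -
  have nu: "phi_nu (psi n) \<in> carrier_mat (2*n-1) (2*n-1)" by (simp add: phi_nu_def)
  have e: "k < 2*n-1 \<Longrightarrow> c < 2*n-1 \<Longrightarrow> phi_nu (psi n) $$ (k,c) = psi n $$ (k+1,c+1)" for k c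
    by (simp add: phi_nu_def)
  consider "b = 0" | "b \<noteq> 0" "even b" | "odd b" by blast
  then show ?thesis
  proof cases
    case 1
    then show ?thesis
      using assms by (subst index_mult_sparse_col[OF assms(1) nu assms(2,3), of 0 0 0 0])
        (auto simp: e index_psi)
  next
    case 2
    then show ?thesis
      using assms by (subst index_mult_sparse_col[OF assms(1) nu assms(2,3), of "b-1" 0 1 0])
        (auto simp: e index_psi)
  next
    case 3
    then have "b+1 < 2*n-1" using assms(3) by presburger
    then show ?thesis
      using 3 assms by (subst index_mult_sparse_col[OF assms(1) nu assms(2,3), of "b+1" 0 "-1" 0])
        (auto simp: e index_psi)
  qed
qed

lemma index_phi_mu_psi_mult:
  assumes "X \<in> carrier_mat (2*n-1) r" "a < 2*n-1" "b < r"
  shows "(phi_mu (psi n) * X) $$ (a,b) =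
    (if a = 0 then 0 else if odd a then - X $$ (a+1,b) else X $$ (a-1,b))"
proof -
  have mu: "phi_mu (psi n) \<in> carrier_mat (2*n-1) (2*n-1)" by (simp add: phi_mu_def)
  have e: "c < 2*n-1 \<Longrightarrow> k < 2*n-1 \<Longrightarrow> phi_mu (psi n) $$ (c,k) = - psi n $$ (c+1,k+1)" for c k
    by (simp add: phi_mu_def mat_inv_psi)
  consider "a = 0" | "odd a" | "a \<noteq> 0" "even a" by blast
  then show ?thesis
  proof cases
    case 1
    then show ?thesis
      using assms by (subst index_mult_sparse_row[OF mu assms(1-3), of 0 0 0 0])
        (auto simp: e index_psi)
  next
    case 2
    then have "a+1 < 2*n-1" using assms(2) by presburger
    then show ?thesis
      using 2 assms by (subst index_mult_sparse_row[OF mu assms(1-3), of "a+1" 0 "-1" 0])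
        (auto simp: e index_psi)
  next
    case 3
    then show ?thesis
      using assms by (subst index_mult_sparse_row[OF mu assms(1-3), of "a-1" 0 1 0])
        (auto simp: e index_psi)
  qed
qed

lemma index_outer_prod:
  assumes "a < m" "b < m"
  shows "(mat_of_cols m [x] * mat_of_rows m [v]) $$ (a,b) = x $ a * v $ b"
proof -
  have "(mat_of_cols m [x] * mat_of_rows m [v]) $$ (a,b)
      = (\<Sum>l<1. mat_of_cols m [x] $$ (a,l) * mat_of_rows m [v] $$ (l,b))"
    by (rule index_mult_mat_sum) (use assms in auto)
  then show ?thesis using assms by (simp add: mat_of_cols_index mat_of_rows_index)
qed

text \<open>alpha_phi (psi n) v and beta_phi (psi n) v are the transvections of the first row and of
  the first column of size m = 2n-1 by psi_shift m v, which is -v\<nu> for the lower right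
  block \<nu> of \<psi>_n.\<close>
definition psi_shift :: "nat \<Rightarrow> 'a::comm_ring_1 vec \<Rightarrow> 'a vec" where
  "psi_shift m v = vec m (\<lambda>k. if k = 0 then 0 else if odd k then v $ (k+1) else - v $ (k-1))"

lemma alpha_phi_psi:
  fixes v :: "'a::comm_ring_1 vec"
  shows "alpha_phi (psi n) v = row_transvection (2*n-1) (psi_shift (2*n-1) v)"
proof (rule eq_matI)
  let ?m = "2*n-1"
  let ?X = "mat_of_cols ?m [phi_d (psi n :: 'a mat)] * mat_of_rows ?m [v]"
  have "mat_of_cols ?m [phi_d (psi n)] \<in> carrier_mat ?m 1" "mat_of_rows ?m [v] \<in> carrier_mat 1 ?m"
    using mat_of_cols_carrier(1)[of ?m "[phi_d (psi n)]"] mat_of_rows_carrier(1)[of ?m "[v]"] by simp_all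
  then have X: "?X \<in> carrier_mat ?m ?m" by (rule mult_carrier_mat)
  have d: "a < ?m \<Longrightarrow> phi_d (psi n :: 'a mat) $ a = (if a = 0 then -1 else 0)" for a
    by (auto simp: phi_d_def mat_inv_psi index_psi)
  have Xe: "?X $$ (a,k) = (if a = 0 then - v $ k else 0)" if "a < ?m" "k < ?m" for a k
  proof -
    have "?X $$ (a,k) = phi_d (psi n) $ a * v $ k" by (rule index_outer_prod[OF that])
    then show ?thesis using d[OF that(1)] by simp
  qed
  fix a b assume "a < dim_row (row_transvection ?m (psi_shift ?m v))"
    "b < dim_col (row_transvection ?m (psi_shift ?m v))"
  then have ab: "a < ?m" "b < ?m" by auto
  have "alpha_phi (psi n) v $$ (a,b) = (if a = b then 1 else 0) + (?X * phi_nu (psi n)) $$ (a,b)"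
    using ab by (simp add: alpha_phi_def Let_def phi_nu_def)
  also have "(?X * phi_nu (psi n)) $$ (a,b) = (if a = 0 then psi_shift ?m v $ b else 0)"
  proof -
    have "odd b \<Longrightarrow> b+1 < ?m" using ab by presburger
    then show ?thesis
      unfolding index_mult_phi_nu_psi[OF X ab] using ab Xe
      by (auto simp: psi_shift_def simp del: index_mult_mat(1))
  qed
  finally show "alpha_phi (psi n) v $$ (a,b) = row_transvection ?m (psi_shift ?m v) $$ (a,b)"
    using ab by (simp add: index_row_transvection)
qed (simp_all add: alpha_phi_def Let_def phi_nu_def)

lemma beta_phi_psi:
  fixes v :: "'a::comm_ring_1 vec"
  shows "beta_phi (psi n) v = col_transvection (2*n-1) (psi_shift (2*n-1) v)"
proof (rule eq_matI)
  let ?m = "2*n-1"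
  let ?P = "mat_of_cols ?m [v]" and ?R = "mat_of_rows ?m [phi_c (psi n :: 'a mat)]"
  have P: "?P \<in> carrier_mat ?m 1" using mat_of_cols_carrier(1)[of ?m "[v]"] by simp
  have R: "?R \<in> carrier_mat 1 ?m" using mat_of_rows_carrier(1)[of ?m "[phi_c (psi n)]"] by simp
  have mu: "phi_mu (psi n :: 'a mat) \<in> carrier_mat ?m ?m" by (simp add: phi_mu_def)
  fix a b assume "a < dim_row (col_transvection ?m (psi_shift ?m v))"
    "b < dim_col (col_transvection ?m (psi_shift ?m v))"
  then have ab: "a < ?m" "b < ?m" by auto
  have c: "?R $$ (0,b) = (if b = 0 then -1 else 0)"
    using ab by (auto simp: phi_c_def index_psi mat_of_rows_index)
  have "beta_phi (psi n) v $$ (a,b) = (if a = b then 1 else 0) + (phi_mu (psi n) * ?P * ?R) $$ (a,b)"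
    using ab mult_carrier_mat[OF mult_carrier_mat[OF mu P] R]
    unfolding beta_phi_def Let_def by (subst index_add_mat(1)) auto
  also have "(phi_mu (psi n) * ?P * ?R) $$ (a,b) = (phi_mu (psi n) * ?P) $$ (a,0) * ?R $$ (0,b)"
    using index_mult_mat_sum[OF mult_carrier_mat[OF mu P] R ab] by simp
  also have "\<dots> = (if b = 0 then psi_shift ?m v $ a else 0)"
  proof -
    have "odd a \<Longrightarrow> a+1 < ?m" using ab by presburger
    then show ?thesis
      unfolding index_phi_mu_psi_mult[OF P ab(1) less_one[THEN iffD2, OF refl]] c using ab
      by (auto simp: psi_shift_def mat_of_cols_index)
  qed
  finally show "beta_phi (psi n) v $$ (a,b) = col_transvection ?m (psi_shift ?m v) $$ (a,b)"
    using ab by (simp add: index_col_transvection)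
qed (simp_all add: beta_phi_def Let_def phi_mu_def)

lemma psi_shift_image:
  assumes "odd m"
  shows "psi_shift m ` carrier_vec m = {y :: 'a::comm_ring_1 vec. y \<in> carrier_vec m \<and> y $ 0 = 0}"
proof (intro equalityI subsetI)
  fix y :: "'a vec" assume "y \<in> psi_shift m ` carrier_vec m"
  then show "y \<in> {y. y \<in> carrier_vec m \<and> y $ 0 = 0}"
    using odd_pos[OF assms] by (auto simp: psi_shift_def)
next
  fix y :: "'a vec" assume "y \<in> {y. y \<in> carrier_vec m \<and> y $ 0 = 0}"
  then have y: "y \<in> carrier_vec m" "y $ 0 = 0" by auto
  let ?v = "vec m (\<lambda>j. if odd j then - y $ (j+1) else y $ (j-1))"
  have "psi_shift m ?v = y"
  proof (rule eq_vecI)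
    fix k assume "k < dim_vec y"
    then have k: "k < m" using y by simp
    then have "odd k \<Longrightarrow> k+1 < m" using assms by presburger
    then show "psi_shift m ?v $ k = y $ k"
      using k y by (auto simp: psi_shift_def)
  qed (use y in \<open>simp add: psi_shift_def\<close>)
  from this[symmetric] show "y \<in> psi_shift m ` carrier_vec m" by (rule rev_image_eqI[OF vec_carrier])
qed

definition first_transvections :: "nat \<Rightarrow> 'a::comm_ring_1 mat set" where
  "first_transvections m =
     row_transvection m ` {y \<in> carrier_vec m. y $ 0 = 0} \<union>
     col_transvection m ` {y \<in> carrier_vec m. y $ 0 = 0}"

lemma first_transvections_carrier: "first_transvections m \<subseteq> carrier_mat m m"
  by (auto simp: first_transvections_def)

lemma E_phi_psi_eq:
  assumes "n \<ge> 1"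
  shows "E_phi (psi n :: 'a::comm_ring_1 mat) = gen_group (2*n-1) (first_transvections (2*n-1))"
proof -
  let ?m = "2*n-1"
  have "{alpha_phi (psi n :: 'a mat) v | v. v \<in> carrier_vec ?m} = row_transvection ?m ` psi_shift ?m ` carrier_vec ?m"
    and "{beta_phi (psi n :: 'a mat) v | v. v \<in> carrier_vec ?m} = col_transvection ?m ` psi_shift ?m ` carrier_vec ?m"
    unfolding alpha_phi_psi beta_phi_psi by blast+
  moreover have "odd ?m" using assms by simp
  ultimately show ?thesis by (simp add: E_phi_def first_transvections_def psi_shift_image)
qed

lemma row_transvection_in_E_psi:
  "n \<ge> 1 \<Longrightarrow> y \<in> carrier_vec (2*n-1) \<Longrightarrow> y $ 0 = 0 \<Longrightarrow>
    row_transvection (2*n-1) y \<in> E_phi (psi n)"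
  unfolding E_phi_psi_eq by (rule gen_group_gen[OF first_transvections_carrier])
    (simp add: first_transvections_def)

lemma col_transvection_in_E_psi:
  "n \<ge> 1 \<Longrightarrow> y \<in> carrier_vec (2*n-1) \<Longrightarrow> y $ 0 = 0 \<Longrightarrow>
    col_transvection (2*n-1) y \<in> E_phi (psi n)"
  unfolding E_phi_psi_eq by (rule gen_group_gen[OF first_transvections_carrier])
    (simp add: first_transvections_def)

lemma E_psi_mult:
  "n \<ge> 1 \<Longrightarrow> A \<in> E_phi (psi n) \<Longrightarrow> B \<in> E_phi (psi n) \<Longrightarrow> A * B \<in> E_phi (psi n)"
  unfolding E_phi_psi_eq by (rule gen_group_mult[OF first_transvections_carrier])

lemma one_in_E_psi: "1\<^sub>m (2*n-1) \<in> E_phi (psi n)"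
  unfolding E_phi_def by (simp add: gen_group.one)

lemma E_psi_subset_Elem:
  assumes "n \<ge> 1"
  shows "E_phi (psi n) \<subseteq> Elem (2*n-1)"
  unfolding E_phi_psi_eq[OF assms] Elem_eq_gen_group
proof (rule gen_group_subsetI[OF elem_gens_carrier elem_gens_invertible])
  show "first_transvections (2*n-1) \<subseteq> gen_group (2*n-1) (elem_gens (2*n-1))"
    unfolding first_transvections_def Elem_eq_gen_group[symmetric]
    using row_transvection_in_Elem col_transvection_in_Elem by blast
qed

lemma elem_mat_eq_row_transvection:
  "j < m \<Longrightarrow> j \<noteq> 0 \<Longrightarrow> elem_mat m 0 j c = row_transvection m (c \<cdot>\<^sub>v unit_vec m j)"
  by (rule eq_matI) (auto simp: index_elem_mat index_row_transvection)

lemma elem_mat_eq_col_transvection: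
  "i < m \<Longrightarrow> i \<noteq> 0 \<Longrightarrow> elem_mat m i 0 c = col_transvection m (c \<cdot>\<^sub>v unit_vec m i)"
  by (rule eq_matI) (auto simp: index_elem_mat index_col_transvection)

lemma elem_mat_commutator:
  assumes "i < m" "j < m" "i \<noteq> 0" "j \<noteq> 0" "i \<noteq> j"
  shows "elem_mat m i j c = elem_mat m i 0 c * elem_mat m 0 j 1 * elem_mat m i 0 (-c) * elem_mat m 0 j (-1)"
proof (rule eq_matI)
  let ?E1 = "elem_mat m i 0 c * elem_mat m 0 j 1"
  let ?E2 = "?E1 * elem_mat m i 0 (-c)"
  have m: "0 < m" using assms by auto
  have E1: "?E1 \<in> carrier_mat m m" and E2: "?E2 \<in> carrier_mat m m"
    by (meson mult_carrier_mat elem_mat_carrier)+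
  have e1: "?E1 $$ (a,b) = (if a = b then 1 else 0) + (if a = i \<and> b = 0 then c else 0)
      + (if a = 0 \<and> b = j then 1 else 0) + (if a = i \<and> b = j then c else 0)"
    if "a < m" "b < m" for a b
    using that assms m by (subst index_mult_elem_mat) (auto simp: index_elem_mat)
  have e2: "?E2 $$ (a,b) = (if a = b then 1 else 0) + (if a = 0 \<and> b = j then 1 else 0)
      + (if a = i \<and> b = j then c else 0)"
    if "a < m" "b < m" for a b
    using that assms m by (subst index_mult_elem_mat[OF E1]) (auto simp: e1 simp del: index_mult_mat)
  fix a b assume "a < dim_row (?E2 * elem_mat m 0 j (-1))" "b < dim_col (?E2 * elem_mat m 0 j (-1))"
  then have ab: "a < m" "b < m" by auto
  show "elem_mat m i j c $$ (a,b) = (?E2 * elem_mat m 0 j (-1)) $$ (a,b)"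
    using ab assms m by (subst index_mult_elem_mat[OF E2])
      (auto simp: e2 index_elem_mat simp del: index_mult_mat)
qed auto

lemma elem_mat_in_E_psi:
  assumes "n \<ge> 1" "i < 2*n-1" "j < 2*n-1" "i \<noteq> j"
  shows "elem_mat (2*n-1) i j c \<in> E_phi (psi n)"
proof -
  have row: "elem_mat (2*n-1) 0 k d \<in> E_phi (psi n)" if "k < 2*n-1" "k \<noteq> 0" for k d
    unfolding elem_mat_eq_row_transvection[OF that]
    by (rule row_transvection_in_E_psi) (use assms that in auto)
  have col: "elem_mat (2*n-1) k 0 d \<in> E_phi (psi n)" if "k < 2*n-1" "k \<noteq> 0" for k d
    unfolding elem_mat_eq_col_transvection[OF that]
    by (rule col_transvection_in_E_psi) (use assms that in auto)
  consider "i = 0" | "j = 0" | "i \<noteq> 0" "j \<noteq> 0" by blast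
  then show ?thesis
  proof cases
    case 3
    have "j \<noteq> 0" "i \<noteq> 0" using 3 by auto
    show ?thesis unfolding elem_mat_commutator[OF assms(2,3) 3 assms(4)]
      by (intro E_psi_mult[OF assms(1)] row col) (use assms 3 in auto)
  qed (use row col assms in auto)
qed


section \<open>Block diagonal matrices one_perp A\<close>

lemma one_perp_carrier: "A \<in> carrier_mat m m \<Longrightarrow> one_perp A \<in> carrier_mat (Suc m) (Suc m)"
  by (auto simp: one_perp_def)

lemma index_one_perp: "A \<in> carrier_mat m m \<Longrightarrow> a < Suc m \<Longrightarrow> b < Suc m \<Longrightarrow>
    one_perp A $$ (a,b) =
    (if a = 0 \<and> b = 0 then 1 else if a = 0 \<or> b = 0 then 0 else A $$ (a-1,b-1))"
  by (auto simp: one_perp_def)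

lemma one_perp_mult:
  assumes A: "A \<in> carrier_mat m m" and B: "B \<in> carrier_mat m m"
  shows "one_perp A * one_perp B = one_perp (A * B)"
proof (rule eq_matI)
  have AB: "A * B \<in> carrier_mat m m" using A B by simp
  fix a b assume "a < dim_row (one_perp (A * B))" "b < dim_col (one_perp (A * B))"
  then have ab: "a < Suc m" "b < Suc m" using AB by (auto simp: one_perp_def)
  have "(one_perp A * one_perp B) $$ (a,b) = (\<Sum>k<Suc m. one_perp A $$ (a,k) * one_perp B $$ (k,b))"
    by (rule index_mult_mat_sum[OF one_perp_carrier[OF A] one_perp_carrier[OF B] ab])
  also have "\<dots> = one_perp A $$ (a,0) * one_perp B $$ (0,b)
      + (\<Sum>k<m. one_perp A $$ (a,Suc k) * one_perp B $$ (Suc k,b))"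
    by (rule sum.lessThan_Suc_shift)
  also have "\<dots> = one_perp (A * B) $$ (a,b)"
  proof (cases "a = 0 \<or> b = 0")
    case True
    then show ?thesis
      using ab by (auto simp: index_one_perp[OF A] index_one_perp[OF B] index_one_perp[OF AB])
  next
    case False
    have "(A * B) $$ (a-1,b-1) = (\<Sum>k<m. A $$ (a-1,k) * B $$ (k,b-1))"
      by (rule index_mult_mat_sum[OF A B]) (use ab False in auto)
    then show ?thesis
      using ab False by (auto simp: index_one_perp[OF A] index_one_perp[OF B] index_one_perp[OF AB])
  qed
  finally show "(one_perp A * one_perp B) $$ (a,b) = one_perp (A * B) $$ (a,b)" .
qed (use assms in \<open>auto simp: one_perp_def\<close>)

lemma one_perp_one: "one_perp (1\<^sub>m m) = 1\<^sub>m (Suc m)"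
  by (rule eq_matI) (auto simp: one_perp_def)

lemma one_perp_elem_mat:
  "i < m \<Longrightarrow> j < m \<Longrightarrow> one_perp (elem_mat m i j c) = elem_mat (Suc m) (Suc i) (Suc j) c"
  by (rule eq_matI) (auto simp: one_perp_def index_elem_mat)

lemma one_perp_mult_elem_mat_row0:
  assumes eta: "eta \<in> Elem m" and j: "j < Suc m" "j \<noteq> 0"
  shows "\<exists>w \<in> carrier_vec (Suc m). w $ 0 = 0 \<and>
    one_perp eta * elem_mat (Suc m) 0 j c = row_transvection (Suc m) w * one_perp eta"
proof -
  obtain etai where etai: "etai \<in> Elem m" "etai * eta = 1\<^sub>m m"
    using Elem_inverse[OF eta] by blast
  have eta': "eta \<in> carrier_mat m m" and etai': "etai \<in> carrier_mat m m"
    using Elem_carrier eta etai(1) by auto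
  have Y: "one_perp eta \<in> carrier_mat (Suc m) (Suc m)" by (rule one_perp_carrier[OF eta'])
  have Yi: "one_perp etai \<in> carrier_mat (Suc m) (Suc m)" by (rule one_perp_carrier[OF etai'])
  have YiY: "one_perp etai * one_perp eta = 1\<^sub>m (Suc m)"
    using one_perp_mult[OF etai' eta'] etai(2) one_perp_one by simp
  define w where "w = vec (Suc m) (\<lambda>b. c * one_perp etai $$ (j,b))"
  have "one_perp eta * elem_mat (Suc m) 0 j c = row_transvection (Suc m) w * one_perp eta"
  proof (rule eq_matI)
    fix a b assume "a < dim_row (row_transvection (Suc m) w * one_perp eta)"
      "b < dim_col (row_transvection (Suc m) w * one_perp eta)"
    then have ab: "a < Suc m" "b < Suc m" using Y by auto
    have "(row_transvection (Suc m) w * one_perp eta) $$ (a,b)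
        = (\<Sum>k<Suc m. (if k = a then one_perp eta $$ (a,b) else 0)
            + (if a = 0 then c * (one_perp etai $$ (j,k) * one_perp eta $$ (k,b)) else 0))"
      unfolding index_mult_mat_sum[OF row_transvection_carrier Y ab]
      by (rule sum.cong) (use ab in \<open>auto simp: index_row_transvection w_def ring_distribs\<close>)
    also have "\<dots> = one_perp eta $$ (a,b) + (if a = 0 then c * (one_perp etai * one_perp eta) $$ (j,b) else 0)"
      using ab unfolding index_mult_mat_sum[OF Yi Y j(1) ab(2)]
      by (simp add: sum.distrib sum_distrib_left del: sum.lessThan_Suc)
    finally show "(one_perp eta * elem_mat (Suc m) 0 j c) $$ (a,b)
        = (row_transvection (Suc m) w * one_perp eta) $$ (a,b)"
      using ab j eta' YiY index_mult_elem_mat[OF Y ab, of 0 j c] by (auto simp: index_one_perp)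
  qed (use Y in auto)
  moreover have "w $ 0 = 0" using j etai' by (simp add: w_def index_one_perp)
  moreover have "w \<in> carrier_vec (Suc m)" by (simp add: w_def)
  ultimately show ?thesis by blast
qed

lemma one_perp_mult_elem_mat_col0:
  assumes eta: "eta \<in> carrier_mat m m" and i: "i < Suc m" "i \<noteq> 0"
  shows "\<exists>u \<in> carrier_vec (Suc m). u $ 0 = 0 \<and>
    one_perp eta * elem_mat (Suc m) i 0 c = col_transvection (Suc m) u * one_perp eta"
proof -
  have Y: "one_perp eta \<in> carrier_mat (Suc m) (Suc m)" by (rule one_perp_carrier[OF eta])
  define u where "u = vec (Suc m) (\<lambda>a. c * one_perp eta $$ (a,i))"
  have "one_perp eta * elem_mat (Suc m) i 0 c = col_transvection (Suc m) u * one_perp eta"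
  proof (rule eq_matI)
    fix a b assume "a < dim_row (col_transvection (Suc m) u * one_perp eta)"
      "b < dim_col (col_transvection (Suc m) u * one_perp eta)"
    then have ab: "a < Suc m" "b < Suc m" using Y by auto
    have "(col_transvection (Suc m) u * one_perp eta) $$ (a,b) = 1 * one_perp eta $$ (a,b) + u $ a * one_perp eta $$ (0,b)"
      by (rule index_mult_sparse_row[OF col_transvection_carrier Y ab ab(1)])
        (use ab in \<open>auto simp: index_col_transvection\<close>)
    then show "(one_perp eta * elem_mat (Suc m) i 0 c) $$ (a,b) = (col_transvection (Suc m) u * one_perp eta) $$ (a,b)"
      using index_mult_elem_mat[OF Y ab i(1), of 0 c] ab by (auto simp: u_def index_one_perp[OF eta])
  qed (use Y in auto)
  moreover have "u $ 0 = 0" using i eta by (simp add: u_def index_one_perp)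
  moreover have "u \<in> carrier_vec (Suc m)" by (simp add: u_def)
  ultimately show ?thesis by blast
qed


section \<open>Factoring transvections of size 2n\<close>

definition psi_tail :: "nat \<Rightarrow> 'a::comm_ring_1 vec \<Rightarrow> 'a vec" where
  "psi_tail n w = vec (2*n) (\<lambda>k. if k = 0 then 0 else (psi n *\<^sub>v w) $ k)"

lemma index_psi_tail:
  assumes "w \<in> carrier_vec (2*n)" "k < 2*n"
  shows "psi_tail n w $ k = (if k = 0 then 0 else if even k then w $ (k+1) else - w $ (k-1))"
  using assms by (simp add: psi_tail_def index_psi_mult_vec del: index_mult_mat_vec)

lemma psi_tail_one:
  "n \<ge> 1 \<Longrightarrow> w \<in> carrier_vec (2*n) \<Longrightarrow> w $ 0 = 0 \<Longrightarrow> psi_tail n w $ 1 = 0"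
  by (simp add: index_psi_tail)

lemma sum_psi_tail_mult_self:
  assumes "w \<in> carrier_vec (2*n)" "w $ 0 = 0"
  shows "(\<Sum>k<2*n. psi_tail n w $ k * w $ k) = 0"
proof -
  have "(\<Sum>k<2*n. psi_tail n w $ k * w $ k) = (psi n *\<^sub>v w) \<bullet> w"
    using assms by (auto simp: scalar_prod_def lessThan_atLeast0 psi_tail_def intro!: sum.cong)
  then show ?thesis using scalar_prod_psi_self[OF assms(1)] by simp
qed

text \<open>With t = psi_tail n w, the vector \<psi> w with its entry 0 set to 0,
  1 + e_0 w^t = (1 + e_0 w^t + t e_1^t) (1 - t e_1^t), because w^t t = 0 and t_1 = w_0 = 0.
  The first factor is symplectic and the second is 1 \<perp> (a first-column transvection).
  Dually, 1 + u e_0^t = (1 + u e_0^t + e_1 t^t) (1 - e_1 t^t) for t = psi_tail n u.\<close>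

definition row_symplectic_part :: "nat \<Rightarrow> 'a::comm_ring_1 vec \<Rightarrow> 'a mat" where
  "row_symplectic_part n w = mat (2*n) (2*n) (\<lambda>(a,b).
     (if a = 0 then w $ b else 0) + (if b = 1 then psi_tail n w $ a else 0))"

definition col_symplectic_part :: "nat \<Rightarrow> 'a::comm_ring_1 vec \<Rightarrow> 'a mat" where
  "col_symplectic_part n u = mat (2*n) (2*n) (\<lambda>(a,b).
     (if b = 0 then u $ a else 0) + (if a = 1 then psi_tail n u $ b else 0))"

lemma symplectic_parts_carrier [simp]:
  "row_symplectic_part n w \<in> carrier_mat (2*n) (2*n)" "col_symplectic_part n w \<in> carrier_mat (2*n) (2*n)"
  "dim_row (row_symplectic_part n w) = 2*n" "dim_col (row_symplectic_part n w) = 2*n"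
  "dim_row (col_symplectic_part n w) = 2*n" "dim_col (col_symplectic_part n w) = 2*n"
  by (simp_all add: row_symplectic_part_def col_symplectic_part_def)

lemma psi_mult_row_symplectic_part:
  assumes "w \<in> carrier_vec (2*n)"
  shows "psi n * row_symplectic_part n w =
    mat (2*n) (2*n) (\<lambda>(k,b). - (if k = 1 then w $ b else if b = 1 then w $ k else 0))"
    (is "_ = ?M")
proof (rule eq_matI)
  have X: "row_symplectic_part n w \<in> carrier_mat (2*n) (2*n)" by simp
  fix k b assume "k < dim_row ?M" "b < dim_col ?M"
  then have kb: "k < 2*n" "b < 2*n" by auto
  show "(psi n * row_symplectic_part n w) $$ (k,b) = ?M $$ (k,b)"
  proof (cases "even k")
    case True
    then have "k+1 < 2*n" "k \<noteq> 1" using kb by presburger+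
    then show ?thesis using True kb assms
      by (subst index_psi_mult[OF X kb]) (simp add: row_symplectic_part_def index_psi_tail)
  next
    case False
    then have "k-1 < 2*n" "k \<noteq> 0" "even (k-1)" "k - 1 + 1 = k" using kb by presburger+
    then show ?thesis using False kb assms
      by (subst index_psi_mult[OF X kb]) (auto simp: row_symplectic_part_def index_psi_tail; presburger)
  qed
qed simp_all

lemma psi_mult_col_symplectic_part:
  assumes "u \<in> carrier_vec (2*n)"
  shows "psi n * col_symplectic_part n u = mat (2*n) (2*n)
    (\<lambda>(k,b). if b = 0 then (psi n *\<^sub>v u) $ k else if k = 0 then (psi n *\<^sub>v u) $ b else 0)"
    (is "_ = ?M")
proof (rule eq_matI)
  have X: "col_symplectic_part n u \<in> carrier_mat (2*n) (2*n)" by simp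
  fix k b assume "k < dim_row ?M" "b < dim_col ?M"
  then have kb: "k < 2*n" "b < 2*n" by auto
  show "(psi n * col_symplectic_part n u) $$ (k,b) = ?M $$ (k,b)"
  proof (cases "even k")
    case True
    then have "k+1 < 2*n" using kb by presburger
    then show ?thesis using True kb assms
      by (subst index_psi_mult[OF X kb])
        (auto simp: col_symplectic_part_def index_psi_tail index_psi_mult_vec simp del: index_mult_mat_vec)
  next
    case False
    then have "k-1 < 2*n" "k \<ge> 1" "k - 1 \<noteq> 1" using kb by presburger+
    then show ?thesis using False kb assms
      by (subst index_psi_mult[OF X kb])
        (auto simp: col_symplectic_part_def index_psi_mult_vec simp del: index_mult_mat_vec)
  qed
qed simp_all

lemma row_symplectic_part_null:
  assumes "n \<ge> 1" "w \<in> carrier_vec (2*n)" "w $ 0 = 0"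
  shows "transpose_mat (row_symplectic_part n w) * (psi n * row_symplectic_part n w) = 0\<^sub>m (2*n) (2*n)"
proof (rule eq_matI)
  let ?X = "row_symplectic_part n w"
  let ?M = "mat (2*n) (2*n) (\<lambda>(k,b). - (if k = 1 then w $ b else if b = 1 then w $ k else 0))"
  have XT: "transpose_mat ?X \<in> carrier_mat (2*n) (2*n)" by simp
  have M: "?M \<in> carrier_mat (2*n) (2*n)" by simp
  have t1: "psi_tail n w $ 1 = 0" by (rule psi_tail_one[OF assms])
  have t0: "psi_tail n w $ 0 = 0" using assms(1) by (simp add: psi_tail_def)
  fix a b assume "a < dim_row (0\<^sub>m (2*n) (2*n) :: 'a mat)" "b < dim_col (0\<^sub>m (2*n) (2*n) :: 'a mat)"
  then have ab: "a < 2*n" "b < 2*n" by auto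
  have "(transpose_mat ?X * ?M) $$ (a,b) = 0"
  proof (cases "b = 1")
    case True
    have "(transpose_mat ?X * ?M) $$ (a,b) =
        (\<Sum>l<2*n. if a = 1 then - (psi_tail n w $ l * w $ l) else 0)"
      unfolding index_mult_mat_sum[OF XT M ab] using True ab
      by (intro sum.cong) (auto simp: row_symplectic_part_def t0 t1 assms(3))
    also have "\<dots> = 0"
      using assms ab sum_psi_tail_mult_self[OF assms(2,3)]
      by (cases "a = 1") (simp_all add: sum_negf)
    finally show ?thesis .
  next
    case False
    have N1: "1 < 2*n" using assms(1) by simp
    have "(transpose_mat ?X * ?M) $$ (a,b) = transpose_mat ?X $$ (a,1) * - w $ b + transpose_mat ?X $$ (a,1) * 0"
      by (rule index_mult_sparse_col[OF XT M ab N1 N1]) (use ab False in auto)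
    then show ?thesis using ab assms t1 by (simp add: row_symplectic_part_def)
  qed
  then show "(transpose_mat ?X * (psi n * ?X)) $$ (a,b) = 0\<^sub>m (2*n) (2*n) $$ (a,b)"
    using ab unfolding psi_mult_row_symplectic_part[OF assms(2)] by simp
qed simp_all

lemma col_symplectic_part_null:
  assumes "n \<ge> 1" "u \<in> carrier_vec (2*n)" "u $ 0 = 0"
  shows "transpose_mat (col_symplectic_part n u) * (psi n * col_symplectic_part n u) = 0\<^sub>m (2*n) (2*n)"
proof (rule eq_matI)
  let ?X = "col_symplectic_part n u" and ?s = "\<lambda>k. (psi n *\<^sub>v u) $ k"
  let ?M = "mat (2*n) (2*n) (\<lambda>(k,b). if b = 0 then ?s k else if k = 0 then ?s b else 0)"
  have XT: "transpose_mat ?X \<in> carrier_mat (2*n) (2*n)" by simp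
  have M: "?M \<in> carrier_mat (2*n) (2*n)" by simp
  have s1: "?s 1 = 0" using assms by (simp add: index_psi_mult_vec del: index_mult_mat_vec)
  fix a b assume "a < dim_row (0\<^sub>m (2*n) (2*n) :: 'a mat)" "b < dim_col (0\<^sub>m (2*n) (2*n) :: 'a mat)"
  then have ab: "a < 2*n" "b < 2*n" by auto
  have "(transpose_mat ?X * ?M) $$ (a,b) = 0"
  proof (cases "b = 0")
    case True
    have "(transpose_mat ?X * ?M) $$ (a,b) = (\<Sum>l<2*n. (if a = 0 then ?s l * u $ l else 0))"
      unfolding index_mult_mat_sum[OF XT M ab] using True ab s1
      by (intro sum.cong) (auto simp: col_symplectic_part_def mult.commute simp del: index_mult_mat_vec)
    also have "\<dots> = 0"
      using scalar_prod_psi_self[OF assms(2)] assms(2)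
      by (cases "a = 0") (simp_all add: scalar_prod_def lessThan_atLeast0 del: index_mult_mat_vec)
    finally show ?thesis .
  next
    case False
    have "(transpose_mat ?X * ?M) $$ (a,b) = transpose_mat ?X $$ (a,0) * ?s b + transpose_mat ?X $$ (a,0) * 0"
      by (rule index_mult_sparse_col[OF XT M ab]) (use ab False in auto)
    then show ?thesis using ab assms False by (simp add: col_symplectic_part_def psi_tail_def)
  qed
  then show "(transpose_mat ?X * (psi n * ?X)) $$ (a,b) = 0\<^sub>m (2*n) (2*n) $$ (a,b)"
    using ab unfolding psi_mult_col_symplectic_part[OF assms(2)] by simp
qed simp_all

lemma symplectic_row_factor:
  assumes "n \<ge> 1" "w \<in> carrier_vec (2*n)" "w $ 0 = 0"
  shows "symplectic n (1\<^sub>m (2*n) + row_symplectic_part n w)"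
proof (rule symplectic_one_plus[OF _ _ row_symplectic_part_null[OF assms]])
  show "transpose_mat (psi n * row_symplectic_part n w) = psi n * row_symplectic_part n w"
    unfolding psi_mult_row_symplectic_part[OF assms(2)] by (rule eq_matI) auto
qed simp

lemma symplectic_col_factor:
  assumes "n \<ge> 1" "u \<in> carrier_vec (2*n)" "u $ 0 = 0"
  shows "symplectic n (1\<^sub>m (2*n) + col_symplectic_part n u)"
proof (rule symplectic_one_plus[OF _ _ col_symplectic_part_null[OF assms]])
  show "transpose_mat (psi n * col_symplectic_part n u) = psi n * col_symplectic_part n u"
    unfolding psi_mult_col_symplectic_part[OF assms(2)] by (rule eq_matI) auto
qed simp


lemma row_transvection_factor:
  assumes "n \<ge> 1" "w \<in> carrier_vec (2*n)" "w $ 0 = 0"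
  shows "row_transvection (2*n) w = (1\<^sub>m (2*n) + row_symplectic_part n w) *
    one_perp (col_transvection (2*n-1) (vec (2*n-1) (\<lambda>a. - psi_tail n w $ (a+1))))"
    (is "_ = ?S * ?H")
proof (rule eq_matI)
  let ?t = "psi_tail n w"
  have N: "Suc (2*n-1) = 2*n" using assms(1) by simp
  have S: "?S \<in> carrier_mat (2*n) (2*n)" by simp
  have H: "?H \<in> carrier_mat (2*n) (2*n)" using one_perp_carrier[OF col_transvection_carrier, of "2*n-1"] N by simp
  have t0: "?t $ 0 = 0" and t1: "?t $ 1 = 0"
    using psi_tail_one[OF assms] assms(1) by (simp_all add: psi_tail_def)
  have Se: "?S $$ (a,l) = (if a = l then 1 else 0) + (if a = 0 then w $ l else 0) + (if l = 1 then ?t $ a else 0)"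
    if "a < 2*n" "l < 2*n" for a l
    using that by (simp add: row_symplectic_part_def)
  have He: "?H $$ (l,b) = (if l = b then 1 else 0) - (if b = 1 then ?t $ l else 0)"
    if "l < 2*n" "b < 2*n" for l b
    using that t0 N by (auto simp: index_one_perp[OF col_transvection_carrier] index_col_transvection)
  fix a b assume "a < dim_row (?S * ?H)" "b < dim_col (?S * ?H)"
  then have ab: "a < 2*n" "b < 2*n" using H by auto
  show "row_transvection (2*n) w $$ (a,b) = (?S * ?H) $$ (a,b)"
  proof (cases "b = 1")
    case True
    have "(?S * ?H) $$ (a,b) = (\<Sum>l<2*n. (if l = 1 then ?S $$ (a,1) else 0) - (if l = a then ?t $ a else 0)
        - (if a = 0 then w $ l * ?t $ l else 0) - (if l = 1 then ?t $ a * ?t $ 1 else 0))"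
      unfolding index_mult_mat_sum[OF S H ab] using True ab
      by (intro sum.cong) (use Se[OF ab(1)] He[OF _ ab(2)] in \<open>auto simp: ring_distribs\<close>)
    also have "\<dots> = ?S $$ (a,1) - ?t $ a"
    proof -
      have "(\<Sum>l<2*n. w $ l * ?t $ l) = 0"
        using sum_psi_tail_mult_self[OF assms(2,3)] by (simp add: mult.commute)
      then show ?thesis using ab True t1 by (cases "a = 0") (simp_all add: sum_subtractf)
    qed
    finally show ?thesis using ab True t0 by (simp add: row_symplectic_part_def index_row_transvection)
  next
    case False
    have "(?S * ?H) $$ (a,b) = ?S $$ (a,b) * 1 + ?S $$ (a,b) * 0"
      by (rule index_mult_sparse_col[OF S H ab ab(2) ab(2)]) (use False He[OF _ ab(2)] in simp)
    then show ?thesis using ab False by (simp add: row_symplectic_part_def index_row_transvection)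
  qed
qed (use assms(1) in \<open>simp_all add: one_perp_def\<close>)

lemma col_transvection_factor:
  assumes "n \<ge> 1" "u \<in> carrier_vec (2*n)" "u $ 0 = 0"
  shows "col_transvection (2*n) u = (1\<^sub>m (2*n) + col_symplectic_part n u) *
    one_perp (row_transvection (2*n-1) (vec (2*n-1) (\<lambda>b. - psi_tail n u $ (b+1))))"
    (is "_ = ?S * ?H")
proof (rule eq_matI)
  let ?t = "psi_tail n u"
  have N: "Suc (2*n-1) = 2*n" using assms(1) by simp
  have N1: "1 < 2*n" using assms(1) by simp
  have S: "?S \<in> carrier_mat (2*n) (2*n)" by simp
  have H: "?H \<in> carrier_mat (2*n) (2*n)" using one_perp_carrier[OF row_transvection_carrier, of "2*n-1"] N by simp
  have t0: "?t $ 0 = 0" and t1: "?t $ 1 = 0"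
    using psi_tail_one[OF assms] assms(1) by (simp_all add: psi_tail_def)
  have Se: "?S $$ (a,l) = (if a = l then 1 else 0) + (if l = 0 then u $ a else 0) + (if a = 1 then ?t $ l else 0)"
    if "a < 2*n" "l < 2*n" for a l
    using that by (simp add: col_symplectic_part_def)
  have He: "?H $$ (l,b) = (if l = b then 1 else 0) + (if l = 1 then - ?t $ b else 0)"
    if "l < 2*n" "b < 2*n" for l b
    using that t0 N by (auto simp: index_one_perp[OF row_transvection_carrier] index_row_transvection)
  fix a b assume "a < dim_row (?S * ?H)" "b < dim_col (?S * ?H)"
  then have ab: "a < 2*n" "b < 2*n" using H by auto
  have "(?S * ?H) $$ (a,b) = ?S $$ (a,b) * 1 + ?S $$ (a,1) * - ?t $ b"
    by (rule index_mult_sparse_col[OF S H ab ab(2) N1]) (use He[OF _ ab(2)] in simp)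
  then show "col_transvection (2*n) u $$ (a,b) = (?S * ?H) $$ (a,b)"
    using ab N1 t0 t1 by (auto simp: col_symplectic_part_def index_col_transvection)
qed (use assms(1) in \<open>simp_all add: one_perp_def\<close>)

lemma row_transvection_decomposition:
  assumes "n \<ge> 1" "w \<in> carrier_vec (2*n)" "w $ 0 = 0"
  obtains S y where "symplectic n S" "y \<in> carrier_vec (2*n-1)" "y $ 0 = 0"
    "row_transvection (2*n) w = S * one_perp (col_transvection (2*n-1) y)"
proof
  show "symplectic n (1\<^sub>m (2*n) + row_symplectic_part n w)" by (rule symplectic_row_factor[OF assms])
  show "vec (2*n-1) (\<lambda>a. - psi_tail n w $ (a+1)) $ 0 = 0"
    using psi_tail_one[OF assms] assms(1) by simp
qed (simp_all add: row_transvection_factor[OF assms])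

lemma col_transvection_decomposition:
  assumes "n \<ge> 1" "u \<in> carrier_vec (2*n)" "u $ 0 = 0"
  obtains S y where "symplectic n S" "y \<in> carrier_vec (2*n-1)" "y $ 0 = 0"
    "col_transvection (2*n) u = S * one_perp (row_transvection (2*n-1) y)"
proof
  show "symplectic n (1\<^sub>m (2*n) + col_symplectic_part n u)" by (rule symplectic_col_factor[OF assms])
  show "vec (2*n-1) (\<lambda>b. - psi_tail n u $ (b+1)) $ 0 = 0"
    using psi_tail_one[OF assms] assms(1) by simp
qed (simp_all add: col_transvection_factor[OF assms])


section \<open>Decomposition of E_2n into symplectic matrices times 1 \<perp> E_psi\<close>

lemma E_psi_carrier: "n \<ge> 1 \<Longrightarrow> A \<in> E_phi (psi n) \<Longrightarrow> A \<in> carrier_mat (2*n-1) (2*n-1)"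
  using E_psi_subset_Elem Elem_carrier by blast

lemma symplectic_absorb_one_perp:
  assumes n: "n \<ge> 1" and s: "symplectic n s" and S: "symplectic n S"
    and tau: "tau \<in> E_phi (psi n)" and eta: "eta \<in> E_phi (psi n)"
    and g: "g \<in> carrier_mat (2*n) (2*n)"
    and commute: "one_perp eta * g = S * one_perp tau * one_perp eta"
  shows "s * one_perp eta * g = (s * S) * one_perp (tau * eta)"
proof -
  have N: "Suc (2*n-1) = 2*n" using n by simp
  have tau': "tau \<in> carrier_mat (2*n-1) (2*n-1)" and eta': "eta \<in> carrier_mat (2*n-1) (2*n-1)"
    using E_psi_carrier[OF n] tau eta by auto
  have T: "one_perp tau \<in> carrier_mat (2*n) (2*n)" and Y: "one_perp eta \<in> carrier_mat (2*n) (2*n)"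
    using one_perp_carrier[OF tau'] one_perp_carrier[OF eta'] N by auto
  have s': "s \<in> carrier_mat (2*n) (2*n)" and S': "S \<in> carrier_mat (2*n) (2*n)"
    using s S by (auto simp: symplectic_def)
  have "s * one_perp eta * g = s * (S * one_perp tau * one_perp eta)"
    by (simp add: assoc_mult_mat[OF s' Y g] commute)
  also have "\<dots> = (s * S) * (one_perp tau * one_perp eta)"
    by (simp add: assoc_mult_mat[OF S' T Y] assoc_mult_mat[OF s' S' mult_carrier_mat[OF T Y]])
  also have "one_perp tau * one_perp eta = one_perp (tau * eta)"
    by (rule one_perp_mult[OF tau' eta'])
  finally show ?thesis .
qed

definition Sp_one_perp_E_psi :: "nat \<Rightarrow> 'a::comm_ring_1 mat set" where
  "Sp_one_perp_E_psi n = {s * one_perp eta | s eta. symplectic n s \<and> eta \<in> E_phi (psi n)}"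

lemma one_in_Sp_one_perp_E_psi:
  assumes "n \<ge> 1"
  shows "1\<^sub>m (2*n) \<in> Sp_one_perp_E_psi n"
proof -
  have "1\<^sub>m (2*n) = 1\<^sub>m (2*n) * one_perp (1\<^sub>m (2*n-1))" using assms by (simp add: one_perp_one)
  then show ?thesis unfolding Sp_one_perp_E_psi_def using symplectic_one one_in_E_psi by blast
qed

lemma Sp_one_perp_E_psi_mult_elem_row0:
  assumes n: "n \<ge> 1" and A: "A \<in> Sp_one_perp_E_psi n" and j: "j < 2*n" "j \<noteq> 0"
  shows "A * elem_mat (2*n) 0 j c \<in> Sp_one_perp_E_psi n"
proof -
  obtain s eta where s: "symplectic n s" and eta: "eta \<in> E_phi (psi n)" and A: "A = s * one_perp eta"
    using A by (auto simp: Sp_one_perp_E_psi_def)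
  have N: "Suc (2*n-1) = 2*n" using n by simp
  have eta_El: "eta \<in> Elem (2*n-1)" using E_psi_subset_Elem[OF n] eta by blast
  obtain w where w: "w \<in> carrier_vec (2*n)" "w $ 0 = 0"
    and commute: "one_perp eta * elem_mat (2*n) 0 j c = row_transvection (2*n) w * one_perp eta"
    using one_perp_mult_elem_mat_row0[OF eta_El, of j c] j unfolding N by auto
  obtain S y where S: "symplectic n S" and y: "y \<in> carrier_vec (2*n-1)" "y $ 0 = 0"
    and factor: "row_transvection (2*n) w = S * one_perp (col_transvection (2*n-1) y)"
    using row_transvection_decomposition[OF n w] by blast
  have tau: "col_transvection (2*n-1) y \<in> E_phi (psi n)" by (rule col_transvection_in_E_psi[OF n y])
  have "A * elem_mat (2*n) 0 j c = (s * S) * one_perp (col_transvection (2*n-1) y * eta)"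
    unfolding A by (rule symplectic_absorb_one_perp[OF n s S tau eta elem_mat_carrier])
      (simp add: commute factor)
  then show ?thesis
    using symplectic_mult[OF s S] E_psi_mult[OF n tau eta] by (auto simp: Sp_one_perp_E_psi_def)
qed

lemma Sp_one_perp_E_psi_mult_elem_col0:
  assumes n: "n \<ge> 1" and A: "A \<in> Sp_one_perp_E_psi n" and i: "i < 2*n" "i \<noteq> 0"
  shows "A * elem_mat (2*n) i 0 c \<in> Sp_one_perp_E_psi n"
proof -
  obtain s eta where s: "symplectic n s" and eta: "eta \<in> E_phi (psi n)" and A: "A = s * one_perp eta"
    using A by (auto simp: Sp_one_perp_E_psi_def)
  have N: "Suc (2*n-1) = 2*n" using n by simp
  have eta': "eta \<in> carrier_mat (2*n-1) (2*n-1)" by (rule E_psi_carrier[OF n eta])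
  obtain u where u: "u \<in> carrier_vec (2*n)" "u $ 0 = 0"
    and commute: "one_perp eta * elem_mat (2*n) i 0 c = col_transvection (2*n) u * one_perp eta"
    using one_perp_mult_elem_mat_col0[OF eta', of i c] i unfolding N by auto
  obtain S y where S: "symplectic n S" and y: "y \<in> carrier_vec (2*n-1)" "y $ 0 = 0"
    and factor: "col_transvection (2*n) u = S * one_perp (row_transvection (2*n-1) y)"
    using col_transvection_decomposition[OF n u] by blast
  have tau: "row_transvection (2*n-1) y \<in> E_phi (psi n)" by (rule row_transvection_in_E_psi[OF n y])
  have "A * elem_mat (2*n) i 0 c = (s * S) * one_perp (row_transvection (2*n-1) y * eta)"
    unfolding A by (rule symplectic_absorb_one_perp[OF n s S tau eta elem_mat_carrier])
      (simp add: commute factor)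
  then show ?thesis
    using symplectic_mult[OF s S] E_psi_mult[OF n tau eta] by (auto simp: Sp_one_perp_E_psi_def)
qed

lemma Sp_one_perp_E_psi_mult_elem_block:
  assumes n: "n \<ge> 1" and A: "A \<in> Sp_one_perp_E_psi n"
    and ij: "i < 2*n" "j < 2*n" "i \<noteq> j" "i \<noteq> 0" "j \<noteq> 0"
  shows "A * elem_mat (2*n) i j c \<in> Sp_one_perp_E_psi n"
proof -
  obtain s eta where s: "symplectic n s" and eta: "eta \<in> E_phi (psi n)" and A: "A = s * one_perp eta"
    using A by (auto simp: Sp_one_perp_E_psi_def)
  have N: "Suc (2*n-1) = 2*n" using n by simp
  have eta': "eta \<in> carrier_mat (2*n-1) (2*n-1)" by (rule E_psi_carrier[OF n eta])
  have ij': "i - 1 < 2*n-1" "j - 1 < 2*n-1" "i - 1 \<noteq> j - 1" using ij by auto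
  let ?e = "elem_mat (2*n-1) (i-1) (j-1) c"
  have elem: "elem_mat (2*n) i j c = one_perp ?e"
    using one_perp_elem_mat[OF ij'(1,2), of c] ij N by simp
  have s': "s \<in> carrier_mat (2*n) (2*n)" using s by (simp add: symplectic_def)
  have Y: "one_perp eta \<in> carrier_mat (2*n) (2*n)" using one_perp_carrier[OF eta'] N by simp
  have E: "one_perp ?e \<in> carrier_mat (2*n) (2*n)"
    using one_perp_carrier[OF elem_mat_carrier, of "2*n-1"] N by simp
  have "A * elem_mat (2*n) i j c = s * (one_perp eta * one_perp ?e)"
    unfolding A elem by (rule assoc_mult_mat[OF s' Y E])
  also have "\<dots> = s * one_perp (eta * ?e)"
    by (simp only: one_perp_mult[OF eta' elem_mat_carrier])
  finally show ?thesis
    using s E_psi_mult[OF n eta elem_mat_in_E_psi[OF n ij']] by (auto simp: Sp_one_perp_E_psi_def)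
qed

lemma Sp_one_perp_E_psi_mult_elem:
  assumes "n \<ge> 1" "A \<in> Sp_one_perp_E_psi n" "i < 2*n" "j < 2*n" "i \<noteq> j"
  shows "A * elem_mat (2*n) i j c \<in> Sp_one_perp_E_psi n"
proof -
  consider "i = 0" | "j = 0" | "i \<noteq> 0" "j \<noteq> 0" by blast
  then show ?thesis
    using Sp_one_perp_E_psi_mult_elem_row0 Sp_one_perp_E_psi_mult_elem_col0
      Sp_one_perp_E_psi_mult_elem_block assms by cases auto
qed

lemma Elem_subset_Sp_one_perp_E_psi:
  assumes n: "n \<ge> 1"
  shows "Elem (2*n) \<subseteq> Sp_one_perp_E_psi n"
proof
  fix A assume "A \<in> Elem (2*n)"
  then show "A \<in> Sp_one_perp_E_psi n" unfolding Elem_eq_gen_group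
  proof induction
    case one
    show ?case by (rule one_in_Sp_one_perp_E_psi[OF n])
  next
    case (mult A g)
    then show ?case using Sp_one_perp_E_psi_mult_elem[OF n] by (auto simp: elem_gens_def)
  next
    case (mult_inv A g h)
    obtain i j c where g: "g = elem_mat (2*n) i j c" "i < 2*n" "j < 2*n" "i \<noteq> j"
      using mult_inv(2) by (auto simp: elem_gens_def)
    have "h = elem_mat (2*n) i j (-c)"
      using elem_mat_inverse_unique[OF g(2-4) mult_inv(3)] mult_inv(5) g(1) by simp
    then show ?case using Sp_one_perp_E_psi_mult_elem[OF n mult_inv(6) g(2-4)] by simp
  qed
qed

theorem corollary4p4:
  fixes n :: nat and eps :: "'a::comm_ring_1 mat"
  assumes "n \<ge> 2" and "eps \<in> Elem (2*n)"
  shows "\<exists>eps0. eps0 \<in> E_phi (psi n) \<and> eps0 \<in> Elem (2*n - 1) \<and>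
     transpose_mat eps * psi n * eps
       = transpose_mat (one_perp eps0) * psi n * one_perp eps0"
proof -
  have n: "n \<ge> 1" using assms(1) by simp \<comment> \<open>the argument only needs n \<ge> 1\<close>
  obtain s eta where s: "symplectic n s" and eta: "eta \<in> E_phi (psi n)" and eps: "eps = s * one_perp eta"
    using Elem_subset_Sp_one_perp_E_psi[OF n] assms(2) by (auto simp: Sp_one_perp_E_psi_def)
  have "one_perp eta \<in> carrier_mat (2*n) (2*n)"
    using one_perp_carrier[OF E_psi_carrier[OF n eta]] n by simp
  then have "transpose_mat eps * psi n * eps = transpose_mat (one_perp eta) * psi n * one_perp eta"
    unfolding eps by (rule symplectic_form_mult[OF s])
  then show ?thesis using eta E_psi_subset_Elem[OF n] by blast
qed
end
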